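(* Let $n_1<n_2<n_3<\cdots$ be the colossally abundant numbers listed in increasing order. Then $$\lim_{i\to\infty}\frac{\log n_{i-1}}{\log n_i}=1.$$
   Context: $\sigma(n)=\sum_{d\mid n}d$. A positive integer $n$ is colossally abundant if there exists $\varepsilon>0$ such that $\sigma(k)/k^{1+\varepsilon}\le \sigma(n)/n^{1+\varepsilon}$ for all $k\in\mathbb N$. There are infinitely many colossally abundant numbers; the first few are $2,6,12,60,120,360,2520,5040,\dots$. *)

theory Defs
  imports Complex_Main
begin

definition divisor_sigma :: "nat \<Rightarrow> nat" where
  "divisor_sigma n = (\<Sum>d\<in>{d. d dvd n}. d)"

definition colossally_abundant :: "nat \<Rightarrow> bool" where
  "colossally_abundant n \<longleftrightarrow> n > 0 \<and>
     (\<exists>\<epsilon>::real. \<epsilon> > 0 \<and>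
        (\<forall>k::nat. k > 0 \<longrightarrow>
           real (divisor_sigma k) / real k powr (1 + \<epsilon>)
             \<le> real (divisor_sigma n) / real n powr (1 + \<epsilon>)))"

end

theory Submission
  imports Defs "HOL-Computational_Algebra.Primes" "HOL-Analysis.Harmonic_Numbers"
    "HOL-Real_Asymp.Real_Asymp"
begin

(*
  Call m an \<epsilon>-champion if it maximises \<sigma>(k)/k^(1+\<epsilon>); the colossally abundant numbers are
  exactly the \<epsilon>-champions for \<epsilon> > 0. The set of \<epsilon> for which a given m is a champion is
  closed and champions decrease as \<epsilon> grows, so by connectedness two consecutive colossally
  abundant numbers M < N are champions for one common \<epsilon>.

  By multiplicativity the exponent a of a prime p in an \<epsilon>-champion maximises
  \<sigma>(p^a)/p^(a(1+\<epsilon>)). This local maximum is unique unless p^\<epsilon> = \<sigma>(p^(a+1))/(p \<sigma>(p^a)),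
  in which case exactly a and a+1 tie. Hence N divides M times the product of the primes S
  whose exponent rises from M to N, and the tie equation allows at most one prime of S for each
  exponent a, of size p^(a+1) \<le> 1/(\<epsilon> log 2). Primes of S with exponent below A therefore
  contribute at most A \<cdot> log(1/\<epsilon>) + O(A) to log N, the remaining ones at most log M / A.
  Finally every prime p divides an \<epsilon>-champion to an exponent at least log(1/\<epsilon>)/log p - 3,
  so log(1/\<epsilon>) = o(log M), and log N \<le> (1 + \<delta>) log M + O\<^sub>\<delta>(1).
*)

section \<open>The sum of divisors\<close>

lemma divisor_sigma_ge: "0 < k \<Longrightarrow> k \<le> divisor_sigma k"
  unfolding divisor_sigma_def
  by (rule member_le_sum) (auto simp: finite_divisors_nat)

lemma divisor_sigma_pos: "0 < k \<Longrightarrow> 0 < divisor_sigma k"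
  using divisor_sigma_ge[of k] by linarith

lemma divisor_sigma_mult:
  assumes "coprime a b" "0 < a" "0 < b"
  shows "divisor_sigma (a * b) = divisor_sigma a * divisor_sigma b"
proof -
  let ?D = "\<lambda>n::nat. {d. d dvd n}"
  have inj: "inj_on (\<lambda>(x, y). x * y) (?D a \<times> ?D b)"
  proof (rule inj_onI, clarsimp)
    fix x1 y1 x2 y2 :: nat
    assume h: "x1 dvd a" "y1 dvd b" "x2 dvd a" "y2 dvd b" "x1 * y1 = x2 * y2"
    have "coprime x1 y2" "coprime x2 y1"
      using assms(1) h by (meson coprime_divisors)+
    then have "x1 dvd x2" "x2 dvd x1"
      using h(5) by (metis coprime_dvd_mult_left_iff dvd_triv_left)+
    then have "x1 = x2" by (simp add: dvd_antisym)
    moreover have "x1 > 0" using h(1) assms(2) by (metis dvd_0_left_iff gr0I)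
    ultimately show "x1 = x2 \<and> y1 = y2" using h(5) by simp
  qed
  have img: "(\<lambda>(x, y). x * y) ` (?D a \<times> ?D b) = ?D (a * b)"
  proof
    show "?D (a * b) \<subseteq> (\<lambda>(x, y). x * y) ` (?D a \<times> ?D b)"
    proof
      fix d assume "d \<in> ?D (a * b)"
      then obtain x y where "d = x * y" "x dvd a" "y dvd b" using division_decomp by blast
      then show "d \<in> (\<lambda>(x, y). x * y) ` (?D a \<times> ?D b)" by force
    qed
  qed (auto intro: mult_dvd_mono)
  have "divisor_sigma (a * b) = (\<Sum>z\<in>?D a \<times> ?D b. (\<lambda>(x, y). x * y) z)"
    unfolding divisor_sigma_def img[symmetric] by (rule sum.reindex[OF inj, unfolded comp_def])
  also have "\<dots> = divisor_sigma a * divisor_sigma b"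
    unfolding divisor_sigma_def by (simp add: sum.cartesian_product sum_product)
  finally show ?thesis .
qed

lemma divisor_sigma_prime_power:
  assumes "prime (p::nat)"
  shows "divisor_sigma (p ^ a) = (\<Sum>i\<le>a. p ^ i)"
proof -
  have "{d. d dvd p ^ a} = (\<lambda>i. p ^ i) ` {..a}"
    using divides_primepow_nat[OF assms] by auto
  moreover have "inj_on (\<lambda>i. p ^ i) {..a}"
    using prime_gt_1_nat[OF assms] by (auto intro!: inj_onI simp: power_inject_exp)
  ultimately show ?thesis unfolding divisor_sigma_def by (simp add: sum.reindex)
qed

lemma divisor_sigma_prime_power_Suc:
  assumes "prime (p::nat)"
  shows "divisor_sigma (p ^ Suc a) = p * divisor_sigma (p ^ a) + 1"
proof -
  have "(\<Sum>i\<le>Suc a. p ^ i) = p ^ 0 + (\<Sum>i\<le>a. p ^ Suc i)" by (rule sum.atMost_Suc_shift)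
  also have "\<dots> = p * (\<Sum>i\<le>a. p ^ i) + 1" by (simp add: sum_distrib_left)
  finally show ?thesis unfolding divisor_sigma_prime_power[OF assms] .
qed

lemma divisor_sigma_prime_power_less:
  assumes "prime (p::nat)"
  shows "divisor_sigma (p ^ a) < p ^ Suc a"
proof (induction a)
  case 0
  then show ?case using prime_gt_1_nat[OF assms] by (simp add: divisor_sigma_def)
next
  case (Suc a)
  have "divisor_sigma (p ^ Suc a) < p * divisor_sigma (p ^ a) + p"
    using divisor_sigma_prime_power_Suc[OF assms, of a] prime_gt_1_nat[OF assms] by linarith
  also have "\<dots> = p * (divisor_sigma (p ^ a) + 1)" by simp
  also have "\<dots> \<le> p * p ^ Suc a" using Suc by (intro mult_le_mono2) simp
  finally show ?case by simp
qed

lemma divisor_sigma_prime_power_mono: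
  assumes "prime (p::nat)" "prime q" "p \<le> q"
  shows "divisor_sigma (p ^ a) \<le> divisor_sigma (q ^ a)"
  unfolding divisor_sigma_prime_power[OF assms(1)] divisor_sigma_prime_power[OF assms(2)]
  by (intro sum_mono power_mono) (use assms in auto)

lemma divisor_sigma_prime_power_strict_mono:
  assumes "prime (p::nat)"
  shows "strict_mono (\<lambda>a. divisor_sigma (p ^ a))"
  unfolding strict_mono_Suc_iff
proof
  fix a
  have "divisor_sigma (p ^ a) \<le> p * divisor_sigma (p ^ a)" using prime_gt_0_nat[OF assms] by simp
  then show "divisor_sigma (p ^ a) < divisor_sigma (p ^ Suc a)"
    using divisor_sigma_prime_power_Suc[OF assms, of a] by linarith
qed

lemma divisor_sigma_le_harm:
  assumes "0 < k"
  shows "real (divisor_sigma k) \<le> real k * harm k"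
proof -
  let ?D = "{d. d dvd k}"
  have "divisor_sigma k = (\<Sum>d\<in>?D. k div d)"
    unfolding divisor_sigma_def
    by (rule sum.reindex_bij_witness[of _ "\<lambda>d. k div d" "\<lambda>d. k div d"])
       (use assms in \<open>auto simp: div_div_eq_right dvd_div_eq_mult elim!: dvdE\<close>)
  then have "real (divisor_sigma k) = (\<Sum>d\<in>?D. real k / real d)"
    by (simp add: real_of_nat_div)
  also have "\<dots> \<le> (\<Sum>d\<in>{1..k}. real k / real d)"
    using assms by (intro sum_mono2) (auto intro: dvd_imp_le Nat.gr0I)
  also have "\<dots> = real k * harm k"
    unfolding harm_def by (simp add: sum_distrib_left divide_inverse)
  finally show ?thesis .
qed

section \<open>The ratio of consecutive prime-power sums\<close>

definition sigma_step :: "nat \<Rightarrow> nat \<Rightarrow> real" where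
  "sigma_step p a = real (divisor_sigma (p ^ Suc a)) / (real p * real (divisor_sigma (p ^ a)))"

lemma sigma_step_eq:
  assumes "prime p"
  shows "sigma_step p a = 1 + 1 / (real p * real (divisor_sigma (p ^ a)))"
  unfolding sigma_step_def divisor_sigma_prime_power_Suc[OF assms]
  using prime_gt_0_nat[OF assms] divisor_sigma_pos[of "p ^ a"] by (simp add: add_divide_distrib)

lemma sigma_step_strict_antimono:
  assumes "prime p" "a < b"
  shows "sigma_step p b < sigma_step p a"
proof -
  have "divisor_sigma (p ^ a) < divisor_sigma (p ^ b)"
    using divisor_sigma_prime_power_strict_mono[OF assms(1)] assms(2) by (rule strict_monoD)
  then have "real p * real (divisor_sigma (p ^ a)) < real p * real (divisor_sigma (p ^ b))"
    using prime_gt_0_nat[OF assms(1)] by simp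
  moreover have "0 < real p * real (divisor_sigma (p ^ a))"
    using prime_gt_0_nat[OF assms(1)] divisor_sigma_pos[of "p ^ a"] by simp
  ultimately show ?thesis
    unfolding sigma_step_eq[OF assms(1)] by (simp add: frac_less2)
qed

lemma sigma_step_antimono_prime:
  assumes "prime p" "prime q" "p \<le> q"
  shows "sigma_step q a \<le> sigma_step p a"
proof -
  have "p * divisor_sigma (p ^ a) \<le> q * divisor_sigma (q ^ a)"
    using divisor_sigma_prime_power_mono[OF assms, of a] assms(3) by (intro mult_mono) auto
  then have "real p * real (divisor_sigma (p ^ a)) \<le> real q * real (divisor_sigma (q ^ a))"
    by (metis of_nat_le_iff of_nat_mult)
  moreover have "0 < real p * real (divisor_sigma (p ^ a))"
    using prime_gt_0_nat[OF assms(1)] divisor_sigma_pos[of "p ^ a"] by simp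
  ultimately show ?thesis
    unfolding sigma_step_eq[OF assms(1)] sigma_step_eq[OF assms(2)]
    by (simp add: divide_left_mono)
qed

lemma sigma_step_le:
  assumes "prime p"
  shows "sigma_step p a \<le> 1 + 1 / real p ^ Suc a"
proof -
  have p0: "0 < real p" using prime_gt_0_nat[OF assms] by simp
  have "p ^ a \<le> divisor_sigma (p ^ a)"
    using divisor_sigma_ge prime_gt_0_nat[OF assms] by simp
  then have "real (p ^ a) \<le> real (divisor_sigma (p ^ a))" by (rule of_nat_mono)
  then have "real p ^ Suc a \<le> real p * real (divisor_sigma (p ^ a))"
    using mult_left_mono[of _ _ "real p"] p0 by simp
  then have "1 / (real p * real (divisor_sigma (p ^ a))) \<le> 1 / real p ^ Suc a"
    using p0 divisor_sigma_pos[of "p ^ a"] prime_gt_0_nat[OF assms] by (intro divide_left_mono) auto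
  then show ?thesis unfolding sigma_step_eq[OF assms] by simp
qed

lemma sigma_step_ge:
  assumes "prime p"
  shows "1 + 1 / real p ^ (a + 2) \<le> sigma_step p a"
proof -
  have p0: "0 < real p" using prime_gt_0_nat[OF assms] by simp
  have "divisor_sigma (p ^ a) \<le> p ^ Suc a"
    using divisor_sigma_prime_power_less[OF assms, of a] by simp
  then have "real (divisor_sigma (p ^ a)) \<le> real (p ^ Suc a)" by (rule of_nat_mono)
  then have "real p * real (divisor_sigma (p ^ a)) \<le> real p ^ (a + 2)"
    using mult_left_mono[of _ _ "real p"] p0 by simp
  moreover have "0 < real p * real (divisor_sigma (p ^ a))"
    using p0 divisor_sigma_pos[of "p ^ a"] by simp
  ultimately have "1 / real p ^ (a + 2) \<le> 1 / (real p * real (divisor_sigma (p ^ a)))"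
    by (intro divide_left_mono) auto
  then show ?thesis unfolding sigma_step_eq[OF assms] by simp
qed

lemma ln_one_plus_ge_half:
  fixes y :: real
  assumes "0 < y" "y \<le> 1/2"
  shows "y / 2 \<le> ln (1 + y)"
proof -
  have "y / 2 \<le> y - y\<^sup>2" using assms mult_left_mono[of y "1/2" y] by (simp add: power2_eq_square)
  also have "\<dots> \<le> ln (1 + y)" using assms by (intro ln_one_plus_pos_lower_bound) auto
  finally show ?thesis .
qed

lemma sigma_step_tie_bound:
  assumes "0 < \<epsilon>" "prime p" "real p powr \<epsilon> = sigma_step p a"
  shows "real (Suc a) * ln (real p) \<le> - ln \<epsilon> - ln (ln 2)"
proof -
  have p2: "2 \<le> real p" using prime_ge_2_nat[OF assms(2)] by simp
  have lnp: "ln 2 \<le> ln (real p)" using p2 by simp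
  have lnp0: "0 < ln (real p)" using p2 by simp
  have "\<epsilon> * ln (real p) = ln (real p powr \<epsilon>)" using p2 by (simp add: ln_powr)
  also have "\<dots> \<le> ln (1 + 1 / real p ^ Suc a)"
    using sigma_step_le[OF assms(2), of a] p2 unfolding assms(3)[symmetric] by (intro ln_mono) auto
  also have "\<dots> \<le> 1 / real p ^ Suc a" by (rule ln_add_one_self_le_self) simp
  finally have "\<epsilon> * ln (real p) * real p ^ Suc a \<le> 1" using p2 by (simp add: field_simps)
  moreover have "0 < \<epsilon> * ln (real p) * real p ^ Suc a" using assms(1) lnp0 p2 by simp
  ultimately have "ln (\<epsilon> * ln (real p) * real p ^ Suc a) \<le> 0" by simp
  moreover have "ln (\<epsilon> * ln (real p) * real p ^ Suc a)
      = ln \<epsilon> + ln (ln (real p)) + real (Suc a) * ln (real p)"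
    using assms(1) lnp0 p2 by (simp add: ln_mult ln_realpow algebra_simps)
  moreover have "ln (ln 2) \<le> ln (ln (real p))" using lnp by (rule ln_mono) simp
  ultimately show ?thesis by linarith
qed

lemma sigma_step_tie_unique:
  assumes "0 < \<epsilon>" "prime p" "prime q"
    and "real p powr \<epsilon> = sigma_step p a" "real q powr \<epsilon> = sigma_step q a"
  shows "p = q"
proof (rule ccontr)
  have less: False if "prime p'" "prime q'" "real p' powr \<epsilon> = sigma_step p' a"
      "real q' powr \<epsilon> = sigma_step q' a" "p' < q'" for p' q'
  proof -
    have "real p' powr \<epsilon> < real q' powr \<epsilon>"
      using assms(1) that(5) prime_gt_0_nat[OF that(1)] by (simp add: powr_less_mono2)
    with sigma_step_antimono_prime[OF that(1,2) less_imp_le[OF that(5)], of a] that(3,4)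
    show False by simp
  qed
  assume "p \<noteq> q"
  then show False using less[of p q] less[of q p] assms by linarith
qed

lemma sigma_step_le_powr_bound:
  assumes "0 < \<epsilon>" "prime p" "sigma_step p a \<le> real p powr \<epsilon>"
  shows "- ln \<epsilon> \<le> real (a + 3) * ln (real p)"
proof -
  let ?y = "1 / real p ^ (a + 2)"
  have p2: "2 \<le> real p" using prime_ge_2_nat[OF assms(2)] by simp
  have lnp: "0 < ln (real p)" using p2 by (simp add: ln_gt_zero)
  have "2 \<le> real p ^ (a + 2)" using p2 self_le_power[of "real p" "a + 2"] by linarith
  then have y: "0 < ?y" "?y \<le> 1/2" by (auto simp: field_simps)
  have "?y / 2 \<le> ln (1 + ?y)" by (rule ln_one_plus_ge_half[OF y])
  also have "\<dots> \<le> ln (real p powr \<epsilon>)"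
    using order_trans[OF sigma_step_ge[OF assms(2), of a] assms(3)] by (rule ln_mono) (use y(1) in linarith)
  also have "\<dots> = \<epsilon> * ln (real p)" using p2 by (simp add: ln_powr)
  finally have "1 \<le> 2 * \<epsilon> * ln (real p) * real p ^ (a + 2)" using p2 by (simp add: field_simps)
  then have "0 \<le> ln (2 * \<epsilon> * ln (real p) * real p ^ (a + 2))" by simp
  also have "\<dots> = ln 2 + ln \<epsilon> + ln (ln (real p)) + real (a + 2) * ln (real p)"
    using assms(1) lnp p2 by (simp add: ln_mult ln_realpow algebra_simps)
  finally show ?thesis
    using ln_le_minus_one[OF lnp] ln_2_less_1 by (simp add: algebra_simps)
qed

section \<open>Champions\<close>

definition sigma_ratio :: "real \<Rightarrow> nat \<Rightarrow> real" where
  "sigma_ratio \<epsilon> k = real (divisor_sigma k) / real k powr (1 + \<epsilon>)"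

definition sigma_champion :: "real \<Rightarrow> nat \<Rightarrow> bool" where
  "sigma_champion \<epsilon> m \<longleftrightarrow> 0 < m \<and> (\<forall>k>0. sigma_ratio \<epsilon> k \<le> sigma_ratio \<epsilon> m)"

lemma colossally_abundant_iff_champion:
  "colossally_abundant m \<longleftrightarrow> (\<exists>\<epsilon>>0. sigma_champion \<epsilon> m)"
  unfolding colossally_abundant_def sigma_champion_def sigma_ratio_def by auto

lemma sigma_ratio_pos: "0 < k \<Longrightarrow> 0 < sigma_ratio \<epsilon> k"
  unfolding sigma_ratio_def using divisor_sigma_pos[of k] by auto

lemma sigma_ratio_mult:
  assumes "coprime a b" "0 < a" "0 < b"
  shows "sigma_ratio \<epsilon> (a * b) = sigma_ratio \<epsilon> a * sigma_ratio \<epsilon> b"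
  unfolding sigma_ratio_def divisor_sigma_mult[OF assms] by (simp add: powr_mult)

lemma sigma_ratio_prime_power_Suc:
  assumes "prime p"
  shows "sigma_ratio \<epsilon> (p ^ Suc a) = sigma_ratio \<epsilon> (p ^ a) * (sigma_step p a / real p powr \<epsilon>)"
proof -
  let ?s = "real (divisor_sigma (p ^ a))" and ?x = "real (p ^ a) powr (1 + \<epsilon>)"
  have p0: "0 < real p" using prime_gt_0_nat[OF assms] by simp
  have "real (p ^ Suc a) powr (1 + \<epsilon>) = real p powr (1 + \<epsilon>) * ?x"
    by (simp add: powr_mult)
  also have "real p powr (1 + \<epsilon>) = real p * real p powr \<epsilon>"
    using p0 by (simp add: powr_add)
  finally have "real (p ^ Suc a) powr (1 + \<epsilon>) = real p * real p powr \<epsilon> * ?x" .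
  moreover have "0 < ?s" using divisor_sigma_pos[of "p ^ a"] p0 by simp
  ultimately show ?thesis
    unfolding sigma_ratio_def sigma_step_def using p0 by (simp add: field_simps)
qed

lemma sigma_champion_pos: "sigma_champion \<epsilon> M \<Longrightarrow> 0 < M"
  unfolding sigma_champion_def by simp

lemma sigma_champion_exponent_max:
  assumes "sigma_champion \<epsilon> M" "prime p"
  shows "sigma_ratio \<epsilon> (p ^ c) \<le> sigma_ratio \<epsilon> (p ^ multiplicity p M)"
proof -
  have M0: "M \<noteq> 0" using sigma_champion_pos[OF assms(1)] by simp
  obtain m where M: "p ^ multiplicity p M * m = M" and "\<not> p dvd m"
    using multiplicity_decompose'[OF M0] assms(2) not_prime_unit by metis
  then have cop: "coprime (p ^ b) m" for b
    using assms(2) by (simp add: prime_imp_coprime coprime_power_left_iff)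
  have m0: "0 < m" using M M0 by (intro Nat.gr0I) auto
  have factor: "sigma_ratio \<epsilon> (p ^ b * m) = sigma_ratio \<epsilon> (p ^ b) * sigma_ratio \<epsilon> m" for b
    using prime_gt_0_nat[OF assms(2)] m0 by (intro sigma_ratio_mult cop) simp_all
  have "sigma_ratio \<epsilon> (p ^ c * m) \<le> sigma_ratio \<epsilon> (p ^ multiplicity p M * m)"
    using assms(1) m0 prime_gt_0_nat[OF assms(2)] unfolding M sigma_champion_def by simp
  then show ?thesis using sigma_ratio_pos[OF m0] unfolding factor by simp
qed

lemma sigma_ratio_prime_power_Suc_le_iff:
  assumes "prime p"
  shows "sigma_ratio \<epsilon> (p ^ Suc a) \<le> sigma_ratio \<epsilon> (p ^ a) \<longleftrightarrow> sigma_step p a \<le> real p powr \<epsilon>"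
  unfolding sigma_ratio_prime_power_Suc[OF assms]
  using sigma_ratio_pos[of "p ^ a" \<epsilon>] prime_gt_0_nat[OF assms] by (simp add: divide_le_eq)

lemma sigma_ratio_prime_power_Suc_less_iff:
  assumes "prime p"
  shows "sigma_ratio \<epsilon> (p ^ Suc a) < sigma_ratio \<epsilon> (p ^ a) \<longleftrightarrow> sigma_step p a < real p powr \<epsilon>"
  unfolding sigma_ratio_prime_power_Suc[OF assms]
  using sigma_ratio_pos[of "p ^ a" \<epsilon>] prime_gt_0_nat[OF assms] by (simp add: divide_less_eq)

lemma sigma_champion_step_le:
  assumes "sigma_champion \<epsilon> M" "prime p"
  shows "sigma_step p (multiplicity p M) \<le> real p powr \<epsilon>"
  using sigma_champion_exponent_max[OF assms] sigma_ratio_prime_power_Suc_le_iff[OF assms(2)] by blast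

text \<open>Maximality at a gives sigma_step p a \<le> p powr \<epsilon>; since sigma_step p decreases strictly,
  c \<mapsto> sigma_ratio \<epsilon> (p ^ c) then decreases strictly from a + 1 on.\<close>

lemma sigma_ratio_prime_power_tie:
  assumes "prime p"
    and max_a: "\<And>c. sigma_ratio \<epsilon> (p ^ c) \<le> sigma_ratio \<epsilon> (p ^ a)"
    and max_b: "\<And>c. sigma_ratio \<epsilon> (p ^ c) \<le> sigma_ratio \<epsilon> (p ^ b)"
    and "a < b"
  shows "b = Suc a \<and> real p powr \<epsilon> = sigma_step p a"
proof -
  let ?f = "\<lambda>c. sigma_ratio \<epsilon> (p ^ c)"
  have step_a: "sigma_step p a \<le> real p powr \<epsilon>"
    using max_a[of "Suc a"] sigma_ratio_prime_power_Suc_le_iff[OF assms(1)] by blast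
  have decreasing: "?f (Suc c) < ?f c" if "a < c" for c
  proof -
    have "sigma_step p c < real p powr \<epsilon>"
      using sigma_step_strict_antimono[OF assms(1) that] step_a by linarith
    then show ?thesis using sigma_ratio_prime_power_Suc_less_iff[OF assms(1)] by blast
  qed
  have below_Suc_a: "?f (Suc a + Suc d) < ?f (Suc a)" for d
  proof (induction d)
    case (Suc d)
    then show ?case using decreasing[of "Suc a + Suc d"] by simp
  qed (use decreasing[of "Suc a"] in simp)
  have b: "b = Suc a"
  proof (rule ccontr)
    assume "b \<noteq> Suc a"
    with \<open>a < b\<close> obtain d where "b = Suc a + Suc d"
      by (metis Suc_lessI add_Suc_right less_imp_Suc_add)
    then have "?f b < ?f (Suc a)" using below_Suc_a by simp
    also have "\<dots> \<le> ?f a" by (rule max_a)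
    also have "\<dots> \<le> ?f b" by (rule max_b)
    finally show False by simp
  qed
  have "\<not> ?f (Suc a) < ?f a" using max_b[of a] unfolding b by (rule leD)
  then have "\<not> sigma_step p a < real p powr \<epsilon>"
    using sigma_ratio_prime_power_Suc_less_iff[OF assms(1)] by blast
  with b step_a show ?thesis by simp
qed

lemma sigma_champions_exponent_rise:
  assumes "sigma_champion \<epsilon> M" "sigma_champion \<epsilon> N" "prime p"
    and "multiplicity p M < multiplicity p N"
  shows "multiplicity p N = Suc (multiplicity p M)
    \<and> real p powr \<epsilon> = sigma_step p (multiplicity p M)"
  by (rule sigma_ratio_prime_power_tie[OF assms(3) sigma_champion_exponent_max[OF assms(1,3)]
        sigma_champion_exponent_max[OF assms(2,3)] assms(4)])

section \<open>Logarithms of champions\<close>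

lemma ln_eq_sum_multiplicity:
  assumes "0 < n"
  shows "ln (real n) = (\<Sum>p\<in>prime_factors n. real (multiplicity p n) * ln (real p))"
proof -
  have n: "n = (\<Prod>p\<in>prime_factors n. p ^ multiplicity p n)"
    using prod_prime_factors[of n] assms by simp
  have "real n = (\<Prod>p\<in>prime_factors n. real p ^ multiplicity p n)"
    by (subst (1) n) simp
  then have "ln (real n) = (\<Sum>p\<in>prime_factors n. ln (real p ^ multiplicity p n))"
    by (simp add: ln_prod in_prime_factors_imp_prime prime_gt_0_nat)
  also have "\<dots> = (\<Sum>p\<in>prime_factors n. real (multiplicity p n) * ln (real p))"
    by (intro sum.cong refl) (simp add: ln_realpow in_prime_factors_imp_prime prime_gt_0_nat)
  finally show ?thesis .
qed

lemma sum_multiplicity_ln_le: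
  assumes "0 < n" "finite P" "\<And>p. p \<in> P \<Longrightarrow> prime p"
  shows "(\<Sum>p\<in>P. real (multiplicity p n) * ln (real p)) \<le> ln (real n)"
proof -
  let ?f = "\<lambda>p. real (multiplicity p n) * ln (real p)"
  have "(\<Sum>p\<in>P. ?f p) = (\<Sum>p\<in>P \<inter> prime_factors n. ?f p)"
    using assms(2,3) by (intro sum.mono_neutral_right) (auto simp: prime_factors_multiplicity)
  also have "\<dots> \<le> (\<Sum>p\<in>prime_factors n. ?f p)"
    by (intro sum_mono2 mult_nonneg_nonneg) (auto dest!: in_prime_factors_imp_prime prime_gt_0_nat)
  finally show ?thesis using ln_eq_sum_multiplicity[OF assms(1)] by simp
qed

lemma sigma_champion_ln_lower:
  assumes "sigma_champion \<epsilon> M" "0 < \<epsilon>" "finite P" "\<And>p. p \<in> P \<Longrightarrow> prime p"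
  shows "(\<Sum>q\<in>P. - ln \<epsilon> - 3 * ln (real q)) \<le> ln (real M)"
proof -
  have "(\<Sum>q\<in>P. - ln \<epsilon> - 3 * ln (real q)) \<le> (\<Sum>q\<in>P. real (multiplicity q M) * ln (real q))"
  proof (rule sum_mono)
    fix q assume "q \<in> P"
    then have q: "prime q" by (rule assms(4))
    from sigma_step_le_powr_bound[OF assms(2) q sigma_champion_step_le[OF assms(1) q]]
    show "- ln \<epsilon> - 3 * ln (real q) \<le> real (multiplicity q M) * ln (real q)"
      by (simp add: distrib_right)
  qed
  also have "\<dots> \<le> ln (real M)"
    by (rule sum_multiplicity_ln_le[OF sigma_champion_pos[OF assms(1)] assms(3,4)])
  finally show ?thesis .
qed

lemma sigma_champion_ln_inverse_bound:
  obtains K where "0 \<le> K"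
    and "\<And>\<epsilon> M. 0 < \<epsilon> \<Longrightarrow> sigma_champion \<epsilon> M \<Longrightarrow> real C * - ln \<epsilon> \<le> ln (real M) + K"
proof -
  obtain P where P: "finite P" "card P = C" "P \<subseteq> {p::nat. prime p}"
    using infinite_arbitrarily_large[OF primes_infinite] by blast
  then have prime_P: "\<And>p. p \<in> P \<Longrightarrow> prime p" by blast
  show thesis
  proof (rule that[of "\<Sum>q\<in>P. 3 * ln (real q)"])
    show "0 \<le> (\<Sum>q\<in>P. 3 * ln (real q))"
      using P(3) by (intro sum_nonneg) (auto dest!: prime_gt_0_nat)
    fix \<epsilon> M assume "0 < \<epsilon>" "sigma_champion \<epsilon> M"
    from sigma_champion_ln_lower[OF this(2,1) P(1) prime_P]
    show "real C * - ln \<epsilon> \<le> ln (real M) + (\<Sum>q\<in>P. 3 * ln (real q))"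
      by (auto simp: sum_subtractf P(2))
  qed
qed

definition rising_primes :: "nat \<Rightarrow> nat \<Rightarrow> nat set" where
  "rising_primes M N = {p. prime p \<and> multiplicity p M < multiplicity p N}"

lemma finite_rising_primes: "finite (rising_primes M N)"
proof (rule finite_subset)
  show "rising_primes M N \<subseteq> prime_factors N"
    by (auto simp: rising_primes_def prime_factors_multiplicity)
qed simp

lemma prime_rising_primes: "p \<in> rising_primes M N \<Longrightarrow> prime p"
  by (simp add: rising_primes_def)

lemma ln_le_add_sum_ln_rising_primes:
  assumes "0 < M" "0 < N"
    and rise: "\<And>p. p \<in> rising_primes M N \<Longrightarrow> multiplicity p N = Suc (multiplicity p M)"
  shows "ln (real N) \<le> ln (real M) + (\<Sum>p\<in>rising_primes M N. ln (real p))"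
proof -
  let ?S = "rising_primes M N"
  have S0: "0 < (\<Prod>p\<in>?S. p)" by (intro prod_pos) (auto dest!: prime_rising_primes prime_gt_0_nat)
  have "N dvd M * (\<Prod>p\<in>?S. p)"
  proof (rule multiplicity_le_imp_dvd)
    fix q :: nat assume q: "prime q"
    have "multiplicity q (\<Prod>p\<in>?S. p) = (if q \<in> ?S then 1 else 0)"
      using multiplicity_prod_prime_powers[OF finite_rising_primes prime_rising_primes q,
          where f = "\<lambda>_. 1"] by simp
    then have "multiplicity q (M * (\<Prod>p\<in>?S. p)) = multiplicity q M + (if q \<in> ?S then 1 else 0)"
      using q assms(1) S0 by (simp add: prime_elem_multiplicity_mult_distrib)
    then show "multiplicity q N \<le> multiplicity q (M * (\<Prod>p\<in>?S. p))"
      using rise[of q] q by (auto simp: rising_primes_def)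
  qed (use assms(2) in simp)
  then have "N \<le> M * (\<Prod>p\<in>?S. p)" using assms(1) S0 by (intro dvd_imp_le) simp_all
  then have "real N \<le> real (M * (\<Prod>p\<in>?S. p))" by (rule of_nat_mono)
  then have "real N \<le> real M * (\<Prod>p\<in>?S. real p)" by simp
  then have "ln (real N) \<le> ln (real M * (\<Prod>p\<in>?S. real p))" using assms(2) by simp
  also have "\<dots> = ln (real M) + ln (\<Prod>p\<in>?S. real p)"
    using assms(1) prod_pos[of ?S real] prime_rising_primes prime_gt_0_nat by (simp add: ln_mult)
  also have "ln (\<Prod>p\<in>?S. real p) = (\<Sum>p\<in>?S. ln (real p))"
    by (intro ln_prod finite_rising_primes) (auto dest!: prime_rising_primes prime_gt_0_nat)
  finally show ?thesis .
qed

text \<open>Distinct rising primes with the same exponent in M would satisfy the same tie equation.\<close>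

lemma sum_ln_rising_primes_low:
  fixes A :: nat
  assumes "sigma_champion \<epsilon> M" "sigma_champion \<epsilon> N" "0 < \<epsilon>"
  defines "S \<equiv> {p\<in>rising_primes M N. multiplicity p M < A}"
  shows "(\<Sum>p\<in>S. ln (real p)) \<le> real A * max 0 (- ln \<epsilon> - ln (ln 2))"
proof -
  have tie: "real p powr \<epsilon> = sigma_step p (multiplicity p M)" if "p \<in> S" for p
    using sigma_champions_exponent_rise[OF assms(1,2)] that by (auto simp: S_def rising_primes_def)
  have prime_S: "prime p" if "p \<in> S" for p
    using that prime_rising_primes unfolding S_def by blast
  have "inj_on (\<lambda>p. multiplicity p M) S"
  proof (rule inj_onI)
    fix p q assume "p \<in> S" "q \<in> S" "multiplicity p M = multiplicity q M"
    then show "p = q"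
      using tie[of p] tie[of q] prime_S by (intro sigma_step_tie_unique[OF assms(3)]) auto
  qed
  then have card: "card S \<le> card {..<A}"
    by (rule card_inj_on_le) (auto simp: S_def)
  have "ln (real p) \<le> max 0 (- ln \<epsilon> - ln (ln 2))" if "p \<in> S" for p
  proof -
    have p: "prime p" using that by (rule prime_S)
    have "real (Suc (multiplicity p M)) * ln (real p) \<le> - ln \<epsilon> - ln (ln 2)"
      by (rule sigma_step_tie_bound[OF assms(3) p tie[OF that]])
    moreover have "0 \<le> real (multiplicity p M) * ln (real p)"
      using prime_gt_0_nat[OF p] by simp
    ultimately show ?thesis by (simp add: algebra_simps)
  qed
  then have "(\<Sum>p\<in>S. ln (real p)) \<le> real (card S) * max 0 (- ln \<epsilon> - ln (ln 2))"
    by (rule sum_bounded_above)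
  also have "\<dots> \<le> real A * max 0 (- ln \<epsilon> - ln (ln 2))"
    using card by (intro mult_right_mono) simp_all
  finally show ?thesis .
qed

lemma sum_ln_rising_primes_high:
  fixes A N :: nat
  assumes "0 < M" "0 < A"
  defines "S \<equiv> {p\<in>rising_primes M N. \<not> multiplicity p M < A}"
  shows "(\<Sum>p\<in>S. ln (real p)) \<le> ln (real M) / real A"
proof -
  have "real A * (\<Sum>p\<in>S. ln (real p)) \<le> (\<Sum>p\<in>S. real (multiplicity p M) * ln (real p))"
    unfolding sum_distrib_left
    by (intro sum_mono mult_right_mono)
       (auto simp: S_def dest!: prime_rising_primes prime_gt_0_nat)
  also have "\<dots> \<le> ln (real M)"
    by (rule sum_multiplicity_ln_le[OF assms(1)]) (auto simp: S_def finite_rising_primes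
        prime_rising_primes)
  finally show ?thesis using assms(2) by (simp add: field_simps)
qed

lemma sigma_champions_ln_le_pair:
  assumes "sigma_champion \<epsilon> M" "sigma_champion \<epsilon> N" "0 < \<epsilon>" "0 < A"
  shows "ln (real N) \<le> ln (real M) + real A * max 0 (- ln \<epsilon> - ln (ln 2)) + ln (real M) / real A"
proof -
  let ?S = "rising_primes M N"
  have "ln (real N) \<le> ln (real M) + (\<Sum>p\<in>?S. ln (real p))"
    using sigma_champions_exponent_rise[OF assms(1,2)]
    by (intro ln_le_add_sum_ln_rising_primes sigma_champion_pos[OF assms(1)]
        sigma_champion_pos[OF assms(2)]) (auto simp: rising_primes_def)
  also have "(\<Sum>p\<in>?S. ln (real p)) = (\<Sum>p\<in>{p\<in>?S. multiplicity p M < A}. ln (real p))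
      + (\<Sum>p\<in>{p\<in>?S. \<not> multiplicity p M < A}. ln (real p))"
    by (subst sum.union_disjoint[symmetric]) (auto intro!: sum.cong simp: finite_rising_primes)
  finally show ?thesis
    using sum_ln_rising_primes_low[OF assms(1-3), of A]
      sum_ln_rising_primes_high[OF sigma_champion_pos[OF assms(1)] assms(4), of N]
    by linarith
qed

lemma sigma_champions_ln_le:
  assumes "0 < \<delta>"
  obtains B where "\<And>\<epsilon> M N. 0 < \<epsilon> \<Longrightarrow> sigma_champion \<epsilon> M \<Longrightarrow> sigma_champion \<epsilon> N \<Longrightarrow>
    ln (real N) \<le> (1 + \<delta>) * ln (real M) + B"
proof -
  have "0 < 2 / \<delta>" using assms by simp
  obtain A :: nat where A: "2 / \<delta> < real A" using reals_Archimedean2 by blast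
  then have A0: "0 < A" using \<open>0 < 2 / \<delta>\<close> by linarith
  have A\<delta>: "1 / real A \<le> \<delta> / 2" using A A0 assms by (simp add: field_simps)
  obtain C :: nat where C: "2 * real A / \<delta> < real C" using reals_Archimedean2 by blast
  moreover have "0 < 2 * real A / \<delta>" using A0 assms by simp
  ultimately have C0: "0 < C" by linarith
  have AC: "real A / real C \<le> \<delta> / 2" using C C0 assms by (simp add: field_simps)
  obtain K where K: "0 \<le> K"
    "\<And>\<epsilon> M. 0 < \<epsilon> \<Longrightarrow> sigma_champion \<epsilon> M \<Longrightarrow> real C * - ln \<epsilon> \<le> ln (real M) + K"
    using sigma_champion_ln_inverse_bound by blast
  show thesis
  proof (rule that[of "\<delta> / 2 * K + real A * \<bar>ln (ln 2)\<bar>"])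
    fix \<epsilon> M N assume champ: "0 < \<epsilon>" "sigma_champion \<epsilon> M" "sigma_champion \<epsilon> N"
    let ?L = "ln (real M)"
    have L0: "0 \<le> ?L" using sigma_champion_pos[OF champ(2)] by simp
    have "real C * max 0 (- ln \<epsilon>) \<le> ?L + K" using K(2)[OF champ(1,2)] L0 K(1) by linarith
    then have "real A / real C * (real C * max 0 (- ln \<epsilon>)) \<le> real A / real C * (?L + K)"
      by (rule mult_left_mono) simp
    also have "\<dots> \<le> \<delta> / 2 * (?L + K)" using AC L0 K(1) by (intro mult_right_mono) auto
    finally have "real A * max 0 (- ln \<epsilon>) \<le> \<delta> / 2 * (?L + K)" using C0 by simp
    moreover have "max 0 (- ln \<epsilon> - ln (ln 2)) \<le> max 0 (- ln \<epsilon>) + \<bar>ln (ln 2)\<bar>" by linarith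
    then have "real A * max 0 (- ln \<epsilon> - ln (ln 2))
        \<le> real A * max 0 (- ln \<epsilon>) + real A * \<bar>ln (ln 2)\<bar>"
      by (metis distrib_left mult_left_mono of_nat_0_le_iff)
    ultimately have low: "real A * max 0 (- ln \<epsilon> - ln (ln 2))
        \<le> \<delta> / 2 * (?L + K) + real A * \<bar>ln (ln 2)\<bar>" by linarith
    have "?L / real A \<le> \<delta> / 2 * ?L" using mult_right_mono[OF A\<delta> L0] by simp
    with sigma_champions_ln_le_pair[OF champ(2,3,1) A0] low
    have "ln (real N) \<le> ?L + (\<delta> / 2 * (?L + K) + real A * \<bar>ln (ln 2)\<bar>) + \<delta> / 2 * ?L"
      by linarith
    also have "\<dots> = (1 + \<delta>) * ?L + (\<delta> / 2 * K + real A * \<bar>ln (ln 2)\<bar>)"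
      by (simp add: field_simps)
    finally show "ln (real N) \<le> (1 + \<delta>) * ?L + (\<delta> / 2 * K + real A * \<bar>ln (ln 2)\<bar>)" .
  qed
qed

section \<open>Consecutive colossally abundant numbers\<close>

lemma sigma_ratio_le:
  assumes "0 < k"
  shows "sigma_ratio \<epsilon> k \<le> (1 + ln (real k)) / real k powr \<epsilon>"
proof -
  have "harm k \<le> 1 + ln (real k)"
    using euler_mascheroni_sequence_decreasing[of 1 k] assms by (simp add: harm_def)
  then have "real (divisor_sigma k) \<le> real k * (1 + ln (real k))"
    using divisor_sigma_le_harm[OF assms] assms by (meson mult_left_mono of_nat_0_le_iff order_trans)
  moreover have "real k powr (1 + \<epsilon>) = real k * real k powr \<epsilon>" using assms by (simp add: powr_add)
  ultimately show ?thesis unfolding sigma_ratio_def using assms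
    by (simp add: divide_right_mono field_simps)
qed

lemma sigma_champion_exists:
  assumes "0 < \<epsilon>"
  obtains K where "sigma_champion \<epsilon> K"
proof -
  have "(\<lambda>k::nat. (1 + ln (real k)) / real k powr \<epsilon>) \<longlonglongrightarrow> 0"
    using assms by real_asymp
  then have "eventually (\<lambda>k. (1 + ln (real k)) / real k powr \<epsilon> < 1) sequentially"
    by (rule order_tendstoD) simp
  then obtain k0 where k0: "\<And>k. k \<ge> k0 \<Longrightarrow> (1 + ln (real k)) / real k powr \<epsilon> < 1"
    unfolding eventually_sequentially by blast
  define F where "F = {1..max 1 k0}"
  have "Max (sigma_ratio \<epsilon> ` F) \<in> sigma_ratio \<epsilon> ` F" by (rule Max_in) (auto simp: F_def)
  then obtain K where "K \<in> F" "sigma_ratio \<epsilon> K = Max (sigma_ratio \<epsilon> ` F)" by auto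
  then have K: "K \<in> F" "\<And>k. k \<in> F \<Longrightarrow> sigma_ratio \<epsilon> k \<le> sigma_ratio \<epsilon> K"
    by (auto simp: F_def)
  show thesis
  proof (rule that, unfold sigma_champion_def, intro conjI allI impI)
    show "0 < K" using K(1) by (simp add: F_def)
    fix k :: nat assume k: "0 < k"
    show "sigma_ratio \<epsilon> k \<le> sigma_ratio \<epsilon> K"
    proof (cases "k \<in> F")
      case False
      then have "k0 \<le> k" using k by (auto simp: F_def)
      then have "sigma_ratio \<epsilon> k < 1" by (rule order_le_less_trans[OF sigma_ratio_le[OF k] k0])
      also have "1 = sigma_ratio \<epsilon> 1" by (simp add: sigma_ratio_def divisor_sigma_def)
      also have "\<dots> \<le> sigma_ratio \<epsilon> K" by (rule K(2)) (simp add: F_def)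
      finally show ?thesis by simp
    qed (rule K(2))
  qed
qed

lemma sigma_champion_antimono:
  assumes "sigma_champion a X" "sigma_champion b Y" "a < b"
  shows "Y \<le> X"
proof -
  have X0: "0 < X" and Y0: "0 < Y" using assms(1,2) by (simp_all add: sigma_champion_pos)
  have ln_ratio: "ln (sigma_ratio e k) = ln (real (divisor_sigma k)) - (1 + e) * ln (real k)"
    if "0 < k" for e k
    unfolding sigma_ratio_def using that divisor_sigma_pos[of k] by (simp add: ln_div ln_powr)
  have "ln (sigma_ratio a Y) \<le> ln (sigma_ratio a X)" "ln (sigma_ratio b X) \<le> ln (sigma_ratio b Y)"
    using assms(1,2) X0 Y0 sigma_ratio_pos unfolding sigma_champion_def by simp_all
  then have "(b - a) * (ln (real Y) - ln (real X)) \<le> 0"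
    unfolding ln_ratio[OF X0] ln_ratio[OF Y0] by (simp add: algebra_simps)
  then have "ln (real Y) \<le> ln (real X)" using assms(3) by (simp add: mult_le_0_iff)
  then show ?thesis using X0 Y0 by simp
qed

lemma closed_sigma_champion: "closed {\<epsilon>. sigma_champion \<epsilon> M}"
proof (cases "M = 0")
  case False
  let ?E = "\<lambda>k. {\<epsilon>. sigma_ratio \<epsilon> k \<le> sigma_ratio \<epsilon> M}"
  have "closed (?E k)" if "0 < k" for k
    unfolding sigma_ratio_def using that False by (intro closed_Collect_le continuous_intros) auto
  then have "closed (\<Inter>k\<in>{0<..}. ?E k)" by (intro closed_INT) auto
  moreover have "{\<epsilon>. sigma_champion \<epsilon> M} = (\<Inter>k\<in>{0<..}. ?E k)"
    using False by (auto simp: sigma_champion_def)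
  ultimately show ?thesis by simp
qed (simp add: sigma_champion_def)

lemma colossally_abundant_consecutive_common_champion:
  assumes "colossally_abundant M" "colossally_abundant N" "M < N"
    and between: "\<And>K. colossally_abundant K \<Longrightarrow> K \<le> M \<or> N \<le> K"
  shows "\<exists>\<epsilon>>0. sigma_champion \<epsilon> M \<and> sigma_champion \<epsilon> N"
proof -
  obtain \<epsilon>\<^sub>2 where \<epsilon>\<^sub>2: "0 < \<epsilon>\<^sub>2" "sigma_champion \<epsilon>\<^sub>2 M"
    using assms(1) colossally_abundant_iff_champion by blast
  obtain \<epsilon>\<^sub>1 where \<epsilon>\<^sub>1: "0 < \<epsilon>\<^sub>1" "sigma_champion \<epsilon>\<^sub>1 N"
    using assms(2) colossally_abundant_iff_champion by blast
  have "\<epsilon>\<^sub>1 \<le> \<epsilon>\<^sub>2"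
  proof (rule ccontr)
    assume "\<not> \<epsilon>\<^sub>1 \<le> \<epsilon>\<^sub>2"
    then have "N \<le> M" by (intro sigma_champion_antimono[OF \<epsilon>\<^sub>2(2) \<epsilon>\<^sub>1(2)]) simp
    with assms(3) show False by simp
  qed
  let ?EM = "{\<epsilon>. sigma_champion \<epsilon> M}" and ?EN = "{\<epsilon>. sigma_champion \<epsilon> N}"
  have "{\<epsilon>\<^sub>1..\<epsilon>\<^sub>2} \<subseteq> ?EM \<union> ?EN"
  proof
    fix \<epsilon> assume \<epsilon>: "\<epsilon> \<in> {\<epsilon>\<^sub>1..\<epsilon>\<^sub>2}"
    show "\<epsilon> \<in> ?EM \<union> ?EN"
    proof (cases "\<epsilon> = \<epsilon>\<^sub>1 \<or> \<epsilon> = \<epsilon>\<^sub>2")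
      case False
      with \<epsilon> have lt: "\<epsilon>\<^sub>1 < \<epsilon>" "\<epsilon> < \<epsilon>\<^sub>2" by auto
      then have "0 < \<epsilon>" using \<epsilon>\<^sub>1(1) by linarith
      then obtain K where K: "sigma_champion \<epsilon> K" by (rule sigma_champion_exists)
      have "M \<le> K" "K \<le> N"
        using sigma_champion_antimono[OF K \<epsilon>\<^sub>2(2) lt(2)] sigma_champion_antimono[OF \<epsilon>\<^sub>1(2) K lt(1)] .
      moreover have "colossally_abundant K"
        using K \<open>0 < \<epsilon>\<close> colossally_abundant_iff_champion by blast
      ultimately have "K = M \<or> K = N" using between by fastforce
      then show ?thesis using K by auto
    qed (use \<epsilon>\<^sub>1 \<epsilon>\<^sub>2 in auto)
  qed
  moreover have "?EM \<inter> {\<epsilon>\<^sub>1..\<epsilon>\<^sub>2} \<noteq> {}" "?EN \<inter> {\<epsilon>\<^sub>1..\<epsilon>\<^sub>2} \<noteq> {}"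
    using \<epsilon>\<^sub>1 \<epsilon>\<^sub>2 \<open>\<epsilon>\<^sub>1 \<le> \<epsilon>\<^sub>2\<close> by auto
  ultimately have "?EM \<inter> ?EN \<inter> {\<epsilon>\<^sub>1..\<epsilon>\<^sub>2} \<noteq> {}"
    using connected_closedD[OF connected_Icc _ _ closed_sigma_champion closed_sigma_champion] by blast
  then show ?thesis using \<epsilon>\<^sub>1(1) by auto
qed

lemma tendsto_ratio_one:
  fixes a b :: "nat \<Rightarrow> real"
  assumes a: "filterlim a at_top sequentially" and le: "\<And>i. a i \<le> b i"
    and bound: "\<And>\<delta>. 0 < \<delta> \<Longrightarrow> \<exists>B. \<forall>i. b i \<le> (1 + \<delta>) * a i + B"
  shows "(\<lambda>i. a i / b i) \<longlonglongrightarrow> 1"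
proof (rule LIMSEQ_I)
  fix r :: real assume r: "0 < r"
  obtain B where B: "\<And>i. b i \<le> (1 + r / 2) * a i + B" using bound[of "r / 2"] r by auto
  have "eventually (\<lambda>i. max 1 (2 * B / r) < a i) sequentially"
    using a unfolding filterlim_at_top_dense by blast
  then obtain i0 where i0: "\<And>i. i \<ge> i0 \<Longrightarrow> max 1 (2 * B / r) < a i"
    unfolding eventually_sequentially by blast
  have "norm (a i / b i - 1) < r" if "i \<ge> i0" for i
  proof -
    have a0: "0 < a i" and "B < r / 2 * a i" using i0[OF that] r by (auto simp: field_simps)
    then have "b i - a i < r * a i" using B[of i] by (simp add: algebra_simps)
    also have "\<dots> \<le> r * b i" using le[of i] r by simp
    finally show ?thesis using a0 le[of i] r by (simp add: field_simps abs_if)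
  qed
  then show "\<exists>i0. \<forall>i\<ge>i0. norm (a i / b i - 1) < r" by blast
qed

theorem mainTheorem4:
  fixes n :: "nat \<Rightarrow> nat"
  assumes "strict_mono n"
    and "range n = {m. colossally_abundant m}"
  shows "(\<lambda>i. ln (real (n i)) / ln (real (n (Suc i)))) \<longlonglongrightarrow> 1"
proof (rule tendsto_ratio_one)
  have CA: "colossally_abundant (n i)" for i using assms(2) by blast
  then have n0: "0 < n i" for i by (simp add: colossally_abundant_def)
  have common: "\<exists>\<epsilon>>0. sigma_champion \<epsilon> (n i) \<and> sigma_champion \<epsilon> (n (Suc i))" for i
  proof (rule colossally_abundant_consecutive_common_champion[OF CA CA])
    show "n i < n (Suc i)" using assms(1) by (simp add: strict_mono_Suc_iff)
    fix K assume "colossally_abundant K"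
    then obtain j where "K = n j" using assms(2) by blast
    then show "K \<le> n i \<or> n (Suc i) \<le> K"
      using assms(1) by (cases "j \<le> i") (auto simp: strict_mono_less_eq)
  qed
  show "filterlim (\<lambda>i. ln (real (n i))) at_top sequentially"
    by (rule filterlim_compose[OF ln_at_top
          filterlim_compose[OF filterlim_real_sequentially filterlim_subseq[OF assms(1)]]])
  show "ln (real (n i)) \<le> ln (real (n (Suc i)))" for i
    using n0[of i] strict_monoD[OF assms(1), of i "Suc i"] by simp
  show "\<exists>B. \<forall>i. ln (real (n (Suc i))) \<le> (1 + \<delta>) * ln (real (n i)) + B" if "0 < \<delta>" for \<delta>
    using sigma_champions_ln_le[OF that] common by metis
qed

end
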